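(* Let $\epsilon\in(0,1)$ and $q\in\mathbb N$. Let $\xi$ be a detailing of $\mu$ with respect to a finite set $A$, let $\eta$ be a distribution over $A\times B$ ($B$ finite) with $\eta|_1=\xi|_2$, let $H:[n]\to([0,1]^{A\times B})^2$ satisfy $(H(i))_1(a,b)=\Pr_{x\sim\xi|_1^{2:a}}[x_i=1]$ for all $i$ and all $(a,b)$ with $\eta(a,b)>0$, and let $\Xi$ be the output distribution of Change-types$(\xi,\eta,H)$. If $\xi$ is $(\epsilon,q)$-good, then the detailing $\Xi|_{2,3}$ of $\tau=\Xi|_2$ (with respect to $A\times B$) is also $(\epsilon,q)$-good.
   Context: Change-types$(\xi,\eta,H)$ outputs a sample $(x,y,(a,b))$ of a distribution $\Xi$ over $\{0,1\}^n\times\{0,1\}^n\times(A\times B)$: draw $(x,a)\sim\xi$ and then $b\sim\eta|_2^{1:a}$; then independently for each $i\in[n]$, with $h_1=(H(i))_1(a,b)$, $h_2=(H(i))_2(a,b)$: if $x_i=1$, set $y_i=0$ with probability $\max\{0,(h_1-h_2)/h_1\}$ and $y_i=1$ otherwise; if $x_i=0$, set $y_i=1$ with probability $\max\{0,(h_2-h_1)/(1-h_1)\}$ and $y_i=0$ otherwise (zero-denominator cases have probability zero). A detailing of $\mu$ w.r.t. a finite set $C$ is a distribution $\zeta$ on $\{0,1\}^n\times C$ with first marginal $\mu$; $\zeta|_1^{2:c}$ is the conditional first coordinate given second coordinate $c$. For a distribution $\nu$ over $\{0,1\}^n$, a $q$-tuple $(j_1,\dots,j_q)$ of distinct indices is $\epsilon$-independent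 w.r.t. $\nu$ if $d_{TV}(\nu|_{\{j_1,\dots,j_q\}},\prod_{\ell}\nu|_{j_\ell})\le\epsilon$; $\nu$ is $(\epsilon,q)$-good if at least a $1-\epsilon$ fraction of $q$-tuples of distinct indices are $\epsilon$-independent; the detailing $\zeta$ is $(\epsilon,q)$-good if there is $J\subseteq C$ with $\zeta|_2(J)\ge1-\epsilon$ and $\zeta|_1^{2:c}$ $(\epsilon,q)$-good for all $c\in J$. *)

theory Defs
  imports "HOL-Probability.Probability"
begin

text \<open>Points of {0,1}^n are bool lists of length n (index i in [n] is position i-1).\<close>

definition tv_dist :: "'x pmf \<Rightarrow> 'x pmf \<Rightarrow> real" where
  "tv_dist p p' = (SUP A. \<bar>measure_pmf.prob p A - measure_pmf.prob p' A\<bar>)"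

fun prod_list_pmf :: "'x pmf list \<Rightarrow> 'x list pmf" where
  "prod_list_pmf [] = return_pmf []"
| "prod_list_pmf (p # ps) = bind_pmf p (\<lambda>b. map_pmf (\<lambda>bs. b # bs) (prod_list_pmf ps))"

definition coord_marg :: "bool list pmf \<Rightarrow> nat \<Rightarrow> bool pmf" where
  "coord_marg \<nu> j = map_pmf (\<lambda>x. x ! j) \<nu>"

definition tuple_marg :: "bool list pmf \<Rightarrow> nat list \<Rightarrow> bool list pmf" where
  "tuple_marg \<nu> js = map_pmf (\<lambda>x. map (\<lambda>j. x ! j) js) \<nu>"

definition eps_independent :: "real \<Rightarrow> bool list pmf \<Rightarrow> nat list \<Rightarrow> bool" where
  "eps_independent \<epsilon> \<nu> js \<longleftrightarrow>
     tv_dist (tuple_marg \<nu> js) (prod_list_pmf (map (coord_marg \<nu>) js)) \<le> \<epsilon>"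

definition distinct_tuples :: "nat \<Rightarrow> nat \<Rightarrow> nat list set" where
  "distinct_tuples n q = {js. length js = q \<and> distinct js \<and> set js \<subseteq> {..<n}}"

definition good_dist :: "nat \<Rightarrow> real \<Rightarrow> nat \<Rightarrow> bool list pmf \<Rightarrow> bool" where
  "good_dist n \<epsilon> q \<nu> \<longleftrightarrow>
     real (card {js \<in> distinct_tuples n q. eps_independent \<epsilon> \<nu> js})
       \<ge> (1 - \<epsilon>) * real (card (distinct_tuples n q))"

definition cond_marg1 :: "('x \<times> 'c) pmf \<Rightarrow> 'c \<Rightarrow> 'x pmf" where
  "cond_marg1 \<zeta> c = map_pmf fst (cond_pmf \<zeta> {p. snd p = c})"

definition cond_marg2 :: "('c \<times> 'x) pmf \<Rightarrow> 'c \<Rightarrow> 'x pmf" where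
  "cond_marg2 \<zeta> c = map_pmf snd (cond_pmf \<zeta> {p. fst p = c})"

definition is_detailing :: "nat \<Rightarrow> bool list pmf \<Rightarrow> (bool list \<times> 'c) pmf \<Rightarrow> bool" where
  "is_detailing n \<mu> \<zeta> \<longleftrightarrow> map_pmf fst \<zeta> = \<mu> \<and> set_pmf \<mu> \<subseteq> {x. length x = n}"

text \<open>J is taken inside the support of the second marginal (conditionals only
  make sense there; this does not change the notion).\<close>
definition good_detailing :: "nat \<Rightarrow> real \<Rightarrow> nat \<Rightarrow> (bool list \<times> 'c) pmf \<Rightarrow> bool" where
  "good_detailing n \<epsilon> q \<zeta> \<longleftrightarrow>
     (\<exists>J. J \<subseteq> set_pmf (map_pmf snd \<zeta>) \<and> measure_pmf.prob (map_pmf snd \<zeta>) J \<ge> 1 - \<epsilon> \<and>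
          (\<forall>c\<in>J. good_dist n \<epsilon> q (cond_marg1 \<zeta> c)))"

text \<open>Probability that y_i = 1 given x_i, h1, h2 (division by zero gives 0 in HOL).\<close>
definition one_prob :: "bool \<Rightarrow> real \<Rightarrow> real \<Rightarrow> real" where
  "one_prob xi h1 h2 =
     (if xi then 1 - max 0 ((h1 - h2) / h1) else max 0 ((h2 - h1) / (1 - h1)))"

definition change_types ::
  "nat \<Rightarrow> (bool list \<times> 'a) pmf \<Rightarrow> ('a \<times> 'b) pmf
     \<Rightarrow> (nat \<Rightarrow> ('a \<times> 'b \<Rightarrow> real) \<times> ('a \<times> 'b \<Rightarrow> real))
     \<Rightarrow> (bool list \<times> bool list \<times> ('a \<times> 'b)) pmf" where
  "change_types n \<xi> \<eta> H =
     bind_pmf \<xi> (\<lambda>(x, a).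
       bind_pmf (cond_marg2 \<eta> a) (\<lambda>b.
         map_pmf (\<lambda>y. (x, y, (a, b)))
           (prod_list_pmf (map (\<lambda>i. bernoulli_pmf
                (one_prob (x ! i) (fst (H i) (a, b)) (snd (H i) (a, b)))) [0..<n]))))"

end

theory Submission
  imports Defs
begin

text \<open>Conditioned on its label (a, b), the output of Change-types is the input conditional
  \<open>\<xi>|a\<close> pushed through a channel that resamples every coordinate independently of the others.
  Such a channel applied to a tuple of coordinates acts on the tuple marginal and on the product
  of the single-coordinate marginals by one and the same Markov kernel, so by the data-processing
  inequality for total variation every \<open>\<epsilon>\<close>-independent tuple stays \<open>\<epsilon>\<close>-independent.
  Labels (a, b) with \<open>a \<in> J\<close> carry the same mass as J, so the witness set for \<open>\<xi>\<close> lifts.\<close>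

lemma set_pmf_prod_list_pmf: "set_pmf (prod_list_pmf ps) \<subseteq> {z. length z = length ps}"
  by (induction ps) auto

lemma map_nth_prod_list_pmf:
  "j < length ps \<Longrightarrow> map_pmf (\<lambda>y. y ! j) (prod_list_pmf ps) = ps ! j"
proof (induction ps arbitrary: j)
  case Nil
  then show ?case by simp
next
  case (Cons p ps)
  then show ?case
    by (cases j) (simp_all add: map_bind_pmf pmf.map_comp o_def bind_return_pmf')
qed

lemma prod_list_pmf_insert:
  "k \<le> length L \<Longrightarrow> prod_list_pmf (take k L @ p # drop k L) =
     bind_pmf p (\<lambda>b. map_pmf (\<lambda>w. take k w @ b # drop k w) (prod_list_pmf L))"
proof (induction L arbitrary: k)
  case Nil
  then show ?case by simp
next
  case (Cons l L)
  show ?case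
  proof (cases k)
    case 0
    then show ?thesis by simp
  next
    case (Suc k')
    have "prod_list_pmf (take k (l # L) @ p # drop k (l # L)) =
       bind_pmf l (\<lambda>c. map_pmf (Cons c)
         (bind_pmf p (\<lambda>b. map_pmf (\<lambda>w. take k' w @ b # drop k' w) (prod_list_pmf L))))"
      using Cons Suc by simp
    also have "\<dots> = bind_pmf p (\<lambda>b. bind_pmf l (\<lambda>c.
        map_pmf (\<lambda>w. c # (take k' w @ b # drop k' w)) (prod_list_pmf L)))"
      unfolding map_bind_pmf pmf.map_comp o_def by (rule bind_commute_pmf)
    also have "\<dots> = bind_pmf p (\<lambda>b. map_pmf (\<lambda>w. take k w @ b # drop k w) (prod_list_pmf (l # L)))"
      using Suc by (simp add: map_bind_pmf pmf.map_comp o_def)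
    finally show ?thesis .
  qed
qed

lemma map_nth_Cons_pred:
  "0 \<notin> set js \<Longrightarrow> map (\<lambda>j. (b # ys) ! j) js = map (\<lambda>j. ys ! j) (map (\<lambda>j. j - 1) js)"
  by (auto simp: nth_Cons')

lemma pred_indices:
  assumes "distinct js" "0 \<notin> set js" "set js \<subseteq> {..<Suc m}"
  shows "distinct (map (\<lambda>j. j - 1) js)" "set (map (\<lambda>j. j - 1) js) \<subseteq> {..<m}"
proof -
  have "inj_on (\<lambda>j. j - 1) (set js)"
    using assms(2) by (intro inj_onI) (metis One_nat_def Suc_pred neq0_conv)
  then show "distinct (map (\<lambda>j. j - 1) js)" using assms(1) by (simp add: distinct_map)
  show "set (map (\<lambda>j. j - 1) js) \<subseteq> {..<m}" using assms(2,3) by (force simp: less_Suc_eq_0_disj)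
qed

lemma map_select_prod_list_pmf:
  "distinct js \<Longrightarrow> set js \<subseteq> {..<length ps} \<Longrightarrow>
   map_pmf (\<lambda>y. map (\<lambda>j. y ! j) js) (prod_list_pmf ps) = prod_list_pmf (map (\<lambda>j. ps ! j) js)"
proof (induction ps arbitrary: js)
  case Nil
  then show ?case by simp
next
  case (Cons p ps)
  have cons: "map_pmf (\<lambda>y. map (\<lambda>j. y ! j) js) (prod_list_pmf (p # ps)) =
     bind_pmf p (\<lambda>b. map_pmf (\<lambda>ys. map (\<lambda>j. (b # ys) ! j) js) (prod_list_pmf ps))"
    by (simp add: map_bind_pmf pmf.map_comp o_def)
  show ?case
  proof (cases "0 \<in> set js")
    case False
    define js' where "js' = map (\<lambda>j. j - 1) js"
    note js' = pred_indices[OF Cons.prems(1) False, folded js'_def]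
    show ?thesis
      unfolding cons map_nth_Cons_pred[OF False] js'_def[symmetric]
      using Cons.IH[OF js'] Cons.prems(2) by simp
  next
    case True
    then obtain js1 js2 where js: "js = js1 @ 0 # js2" by (meson split_list)
    then have n1: "0 \<notin> set js1" and n2: "0 \<notin> set js2" using Cons.prems(1) by auto
    define js' where "js' = map (\<lambda>j. j - 1) (js1 @ js2)"
    define k where "k = length js1"
    note js' = pred_indices[of "js1 @ js2", folded js'_def]
    have IH: "map_pmf (\<lambda>y. map (\<lambda>j. y ! j) js') (prod_list_pmf ps) = prod_list_pmf (map (\<lambda>j. ps ! j) js')"
      using Cons.prems js n1 n2 by (intro Cons.IH js') auto
    have split: "map (\<lambda>j. (b # ys) ! j) js =
        take k (map (\<lambda>j. ys ! j) js') @ b # drop k (map (\<lambda>j. ys ! j) js')" for b and ys :: "'a list"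
      unfolding js'_def k_def js
      using map_nth_Cons_pred[OF n1, of b ys] map_nth_Cons_pred[OF n2, of b ys] by simp
    have "map_pmf (\<lambda>y. map (\<lambda>j. y ! j) js) (prod_list_pmf (p # ps)) =
        bind_pmf p (\<lambda>b. map_pmf (\<lambda>w. take k w @ b # drop k w)
          (map_pmf (\<lambda>y. map (\<lambda>j. y ! j) js') (prod_list_pmf ps)))"
      unfolding cons split by (simp only: pmf.map_comp o_def)
    also have "\<dots> = prod_list_pmf (map (\<lambda>j. (p # ps) ! j) js)"
      unfolding IH split[symmetric] by (subst prod_list_pmf_insert[symmetric]) (simp_all add: k_def js'_def js
          map_nth_Cons_pred[OF n1, of p ps] map_nth_Cons_pred[OF n2, of p ps])
    finally show ?thesis .
  qed
qed

lemma prod_list_pmf_map_bind: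
  "prod_list_pmf (map (\<lambda>j. bind_pmf (p j) (k j)) js) =
   bind_pmf (prod_list_pmf (map p js)) (\<lambda>z. prod_list_pmf (map2 k js z))"
proof (induction js)
  case Nil
  then show ?case by simp
next
  case (Cons j js)
  have "prod_list_pmf (map (\<lambda>j. bind_pmf (p j) (k j)) (j # js)) =
     bind_pmf (p j) (\<lambda>b. bind_pmf (k j b) (\<lambda>b'. map_pmf (Cons b')
        (bind_pmf (prod_list_pmf (map p js)) (\<lambda>z. prod_list_pmf (map2 k js z)))))"
    by (simp only: list.map prod_list_pmf.simps Cons bind_assoc_pmf)
  also have "\<dots> = bind_pmf (p j) (\<lambda>b. bind_pmf (prod_list_pmf (map p js)) (\<lambda>z.
        bind_pmf (k j b) (\<lambda>b'. map_pmf (Cons b') (prod_list_pmf (map2 k js z)))))"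
    unfolding map_bind_pmf by (subst bind_commute_pmf) (rule refl)
  also have "\<dots> = bind_pmf (prod_list_pmf (map p (j # js))) (\<lambda>z. prod_list_pmf (map2 k (j # js) z))"
    by (simp only: list.map prod_list_pmf.simps bind_assoc_pmf bind_map_pmf zip_Cons_Cons prod.case)
  finally show ?case .
qed

definition label_mixture :: "'c pmf \<Rightarrow> ('c \<Rightarrow> 'x pmf) \<Rightarrow> ('x \<times> 'c) pmf" where
  "label_mixture M Q = bind_pmf M (\<lambda>c. map_pmf (\<lambda>x. (x, c)) (Q c))"

lemma map_snd_label_mixture: "map_pmf snd (label_mixture M Q) = M"
  by (simp add: label_mixture_def map_bind_pmf pmf.map_comp o_def bind_return_pmf')

lemma pmf_label_mixture: "pmf (label_mixture M Q) (x, c) = pmf M c * pmf (Q c) x"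
proof -
  have pmf_labelled: "pmf (map_pmf (\<lambda>x. (x, c')) (Q c')) (x, c) = (if c' = c then pmf (Q c) x else 0)"
    for c'
  proof (cases "c' = c")
    case True
    then show ?thesis using pmf_map_inj'[of "\<lambda>x. (x, c)" "Q c" x] by (simp add: inj_def)
  next
    case False
    then show ?thesis by (auto simp: pmf_eq_0_set_pmf)
  qed
  have "pmf (label_mixture M Q) (x, c) = (\<integral>c'. (if c' = c then pmf (Q c) x else 0) \<partial>measure_pmf M)"
    unfolding label_mixture_def pmf_bind pmf_labelled ..
  also have "\<dots> = (\<Sum>c'\<in>{c}. pmf M c' *\<^sub>R (if c' = c then pmf (Q c) x else 0))"
    by (rule integral_measure_pmf) (auto split: if_splits)
  finally show ?thesis by simp
qed

lemma cond_marg1_label_mixture: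
  assumes "c \<in> set_pmf M"
  shows "cond_marg1 (label_mixture M Q) c = Q c"
proof -
  define P where "P = label_mixture M Q"
  have "c \<in> snd ` set_pmf P"
    using assms map_snd_label_mixture[of M Q] unfolding P_def by (metis set_map_pmf)
  then have label_c: "set_pmf P \<inter> {z. snd z = c} \<noteq> {}" by blast
  have "measure_pmf.prob P {z. snd z = c} = measure_pmf.prob (map_pmf snd P) {c}"
    by (simp add: vimage_def)
  then have prob_c: "measure_pmf.prob P {z. snd z = c} = pmf M c"
    unfolding P_def map_snd_label_mixture measure_pmf_single .
  have "pmf M c > 0" using assms by (rule pmf_positive)
  have "cond_pmf P {z. snd z = c} = map_pmf (\<lambda>x. (x, c)) (Q c)"
  proof (rule pmf_eqI)
    fix z
    show "pmf (cond_pmf P {z. snd z = c}) z = pmf (map_pmf (\<lambda>x. (x, c)) (Q c)) z"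
    proof (cases "snd z = c")
      case True
      then show ?thesis using \<open>pmf M c > 0\<close> pmf_map_inj'[of "\<lambda>x. (x, c)" "Q c" "fst z"]
        by (cases z) (simp add: pmf_cond[OF label_c] prob_c pmf_label_mixture[of M Q, folded P_def] inj_def)
    next
      case False
      then show ?thesis by (auto simp: pmf_cond[OF label_c] pmf_eq_0_set_pmf)
    qed
  qed
  then show ?thesis unfolding cond_marg1_def P_def by (simp add: pmf.map_comp o_def)
qed

lemma label_mixture_cond_marg1: "label_mixture (map_pmf snd \<xi>) (cond_marg1 \<xi>) = \<xi>"
proof -
  have "cond_pmf \<xi> {z. snd z = a} = map_pmf (\<lambda>x. (x, a)) (cond_marg1 \<xi> a)"
    if "a \<in> set_pmf (map_pmf snd \<xi>)" for a
  proof -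
    have "set_pmf \<xi> \<inter> {z. snd z = a} \<noteq> {}" using that by auto
    then show ?thesis unfolding cond_marg1_def pmf.map_comp o_def
      by (intro map_pmf_idI[symmetric]) auto
  qed
  then have "label_mixture (map_pmf snd \<xi>) (cond_marg1 \<xi>) =
      bind_pmf (map_pmf snd \<xi>) (\<lambda>a. cond_pmf \<xi> {z. snd z = a})"
    unfolding label_mixture_def by (intro bind_pmf_cong) auto
  also have "\<dots> = \<xi>"
    by (rule bind_cond_pmf_cancel) (auto simp: vimage_def eq_commute)
  finally show ?thesis .
qed

lemma measure_bind_pmf_finite:
  assumes "finite S" "set_pmf p \<subseteq> S"
  shows "measure_pmf.prob (bind_pmf p K) A = (\<Sum>x\<in>S. pmf p x * measure_pmf.prob (K x) A)"
proof -
  have "measure_pmf.prob (bind_pmf p K) A = pmf (map_pmf (\<lambda>y. y \<in> A) (bind_pmf p K)) True"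
    by (simp add: pmf_map vimage_def)
  also have "\<dots> = (\<integral>x. measure_pmf.prob (K x) A \<partial>measure_pmf p)"
    by (simp add: map_bind_pmf pmf_bind pmf_map vimage_def)
  also have "\<dots> = (\<Sum>x\<in>S. pmf p x *\<^sub>R measure_pmf.prob (K x) A)"
    using assms by (intro integral_measure_pmf) auto
  finally show ?thesis by simp
qed

lemma abs_prob_diff_le_tv_dist:
  "\<bar>measure_pmf.prob p A - measure_pmf.prob p' A\<bar> \<le> tv_dist p p'"
proof -
  have "\<bar>measure_pmf.prob p B - measure_pmf.prob p' B\<bar> \<le> 1" for B
    using measure_pmf.prob_le_1[of p B] measure_pmf.prob_le_1[of p' B]
      measure_nonneg[of p B] measure_nonneg[of p' B] by linarith
  then show ?thesis unfolding tv_dist_def by (intro cSUP_upper bdd_aboveI2) auto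
qed

text \<open>A difference of two pmfs tested against a weight in [0, 1] is squeezed between the
  probability differences of the sets where the difference is negative resp. positive.\<close>
lemma abs_weighted_pmf_diff_le_tv_dist:
  assumes S: "finite S" "set_pmf p \<subseteq> S" "set_pmf p' \<subseteq> S"
    and f: "\<And>x. 0 \<le> f x" "\<And>x. f x \<le> 1"
  shows "\<bar>\<Sum>x\<in>S. (pmf p x - pmf p' x) * f x\<bar> \<le> tv_dist p p'"
proof -
  define d where "d x = pmf p x - pmf p' x" for x
  have sum_d: "(\<Sum>x\<in>{x\<in>S. P (d x)}. d x) =
      measure_pmf.prob p {x\<in>S. P (d x)} - measure_pmf.prob p' {x\<in>S. P (d x)}" for P
    using S(1) by (simp add: measure_measure_pmf_finite d_def sum_subtractf)
  have "(\<Sum>x\<in>S. d x * f x) \<le> (\<Sum>x\<in>S. if 0 < d x then d x else 0)"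
    using f by (intro sum_mono) (auto intro: mult_left_le mult_nonpos_nonneg)
  also have "\<dots> = (\<Sum>x\<in>{x\<in>S. 0 < d x}. d x)"
    using S(1) by (simp add: sum.inter_filter)
  finally have upper: "(\<Sum>x\<in>S. d x * f x) \<le> tv_dist p p'"
    using sum_d[of "\<lambda>t. 0 < t"] abs_prob_diff_le_tv_dist[of p "{x\<in>S. 0 < d x}" p'] by linarith
  have "(\<Sum>x\<in>{x\<in>S. d x < 0}. d x) = (\<Sum>x\<in>S. if d x < 0 then d x else 0)"
    using S(1) by (simp add: sum.inter_filter)
  also have "\<dots> \<le> (\<Sum>x\<in>S. d x * f x)"
    using f by (intro sum_mono) (auto intro: mult_left_le_one_le mult_left_mono_neg)
  finally have lower: "- tv_dist p p' \<le> (\<Sum>x\<in>S. d x * f x)"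
    using sum_d[of "\<lambda>t. t < 0"] abs_prob_diff_le_tv_dist[of p "{x\<in>S. d x < 0}" p'] by linarith
  from upper lower show ?thesis unfolding d_def by linarith
qed

lemma tv_dist_bind_pmf_le:
  assumes "finite S" "set_pmf p \<subseteq> S" "set_pmf p' \<subseteq> S"
  shows "tv_dist (bind_pmf p K) (bind_pmf p' K) \<le> tv_dist p p'"
  unfolding tv_dist_def[of "bind_pmf p K"]
proof (rule cSUP_least)
  fix A
  have "measure_pmf.prob (bind_pmf p K) A - measure_pmf.prob (bind_pmf p' K) A =
      (\<Sum>x\<in>S. (pmf p x - pmf p' x) * measure_pmf.prob (K x) A)"
    unfolding measure_bind_pmf_finite[OF assms(1,2)] measure_bind_pmf_finite[OF assms(1,3)]
    by (simp add: sum_subtractf left_diff_distrib)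
  then show "\<bar>measure_pmf.prob (bind_pmf p K) A - measure_pmf.prob (bind_pmf p' K) A\<bar> \<le> tv_dist p p'"
    using abs_weighted_pmf_diff_le_tv_dist[OF assms] by simp
qed simp

definition coord_channel :: "nat \<Rightarrow> (nat \<Rightarrow> bool \<Rightarrow> bool pmf) \<Rightarrow> bool list \<Rightarrow> bool list pmf" where
  "coord_channel n G x = prod_list_pmf (map (\<lambda>i. G i (x ! i)) [0..<n])"

lemma tuple_marg_bind_coord_channel:
  assumes "distinct js" "set js \<subseteq> {..<n}"
  shows "tuple_marg (bind_pmf \<nu> (coord_channel n G)) js =
    bind_pmf (tuple_marg \<nu> js) (\<lambda>z. prod_list_pmf (map2 G js z))"
proof -
  have "map_pmf (\<lambda>y. map (\<lambda>j. y ! j) js) (coord_channel n G x) =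
      prod_list_pmf (map (\<lambda>j. G j (x ! j)) js)" for x
  proof -
    have "map_pmf (\<lambda>y. map (\<lambda>j. y ! j) js) (coord_channel n G x) =
        prod_list_pmf (map (\<lambda>j. map (\<lambda>i. G i (x ! i)) [0..<n] ! j) js)"
      unfolding coord_channel_def using assms by (intro map_select_prod_list_pmf) auto
    also have "\<dots> = prod_list_pmf (map (\<lambda>j. G j (x ! j)) js)"
      using assms(2) by (intro arg_cong[where f = prod_list_pmf] map_cong) auto
    finally show ?thesis .
  qed
  then show ?thesis
    by (simp add: tuple_marg_def map_bind_pmf bind_map_pmf zip_map2 zip_same_conv_map o_def)
qed

lemma coord_marg_bind_coord_channel:
  "j < n \<Longrightarrow> coord_marg (bind_pmf \<nu> (coord_channel n G)) j = bind_pmf (coord_marg \<nu> j) (G j)"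
  by (simp add: coord_marg_def coord_channel_def map_bind_pmf bind_map_pmf map_nth_prod_list_pmf)

lemma eps_independent_bind_coord_channel:
  assumes js: "distinct js" "set js \<subseteq> {..<n}" and "eps_independent \<epsilon> \<nu> js"
  shows "eps_independent \<epsilon> (bind_pmf \<nu> (coord_channel n G)) js"
proof -
  have "map (coord_marg (bind_pmf \<nu> (coord_channel n G))) js =
      map (\<lambda>j. bind_pmf (coord_marg \<nu> j) (G j)) js"
    using js(2) by (intro map_cong) (auto simp: coord_marg_bind_coord_channel)
  then have prod_marg: "prod_list_pmf (map (coord_marg (bind_pmf \<nu> (coord_channel n G))) js) =
      bind_pmf (prod_list_pmf (map (coord_marg \<nu>) js)) (\<lambda>z. prod_list_pmf (map2 G js z))"
    by (metis prod_list_pmf_map_bind)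
  have "set_pmf (tuple_marg \<nu> js) \<subseteq> {z. length z = length js}"
    by (auto simp: tuple_marg_def)
  moreover have "set_pmf (prod_list_pmf (map (coord_marg \<nu>) js)) \<subseteq> {z. length z = length js}"
    using set_pmf_prod_list_pmf by fastforce
  moreover have "finite {z :: bool list. length z = length js}"
    using finite_lists_length_eq[of "UNIV :: bool set"] by simp
  ultimately show ?thesis
    using assms(3) tv_dist_bind_pmf_le
    unfolding eps_independent_def tuple_marg_bind_coord_channel[OF js] prod_marg
    by (meson order_trans)
qed

lemma finite_distinct_tuples: "finite (distinct_tuples n q)"
  unfolding distinct_tuples_def
  by (rule finite_subset[OF _ finite_lists_length_eq[of "{..<n}" q]]) auto

lemma good_dist_bind_coord_channel:
  assumes "good_dist n \<epsilon> q \<nu>"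
  shows "good_dist n \<epsilon> q (bind_pmf \<nu> (coord_channel n G))"
proof -
  have "card {js \<in> distinct_tuples n q. eps_independent \<epsilon> \<nu> js}
      \<le> card {js \<in> distinct_tuples n q. eps_independent \<epsilon> (bind_pmf \<nu> (coord_channel n G)) js}"
    using finite_distinct_tuples
    by (intro card_mono finite_Collect_conjI) (auto simp: distinct_tuples_def intro: eps_independent_bind_coord_channel)
  then show ?thesis using assms unfolding good_dist_def by linarith
qed

lemma good_detailing_label_mixture:
  assumes "good_detailing n \<epsilon> q \<xi>" and "map_pmf fst M = map_pmf snd \<xi>"
    and "\<And>c. c \<in> set_pmf M \<Longrightarrow> good_dist n \<epsilon> q (cond_marg1 \<xi> (fst c)) \<Longrightarrow> good_dist n \<epsilon> q (Q c)"
  shows "good_detailing n \<epsilon> q (label_mixture M Q)"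
proof -
  from assms(1) obtain J where J: "measure_pmf.prob (map_pmf snd \<xi>) J \<ge> 1 - \<epsilon>"
    "\<forall>a\<in>J. good_dist n \<epsilon> q (cond_marg1 \<xi> a)"
    unfolding good_detailing_def by blast
  define J' where "J' = fst -` J \<inter> set_pmf M"
  have "measure_pmf.prob M J' = measure_pmf.prob (map_pmf fst M) J"
    unfolding J'_def by (simp add: measure_Int_set_pmf)
  then have "measure_pmf.prob M J' \<ge> 1 - \<epsilon>" using J(1) assms(2) by simp
  moreover have "good_dist n \<epsilon> q (cond_marg1 (label_mixture M Q) c)" if "c \<in> J'" for c
    using that J(2) assms(3) by (auto simp: J'_def cond_marg1_label_mixture)
  ultimately show ?thesis
    unfolding good_detailing_def map_snd_label_mixture by (intro exI[of _ J']) (auto simp: J'_def)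
qed

lemma change_types_eq_label_mixture:
  fixes H
  defines "G c i b \<equiv> bernoulli_pmf (one_prob b (fst (H i) c) (snd (H i) c))"
  shows "map_pmf (\<lambda>(x, y, ab). (y, ab)) (change_types n \<xi> \<eta> H) =
    label_mixture (bind_pmf (map_pmf snd \<xi>) (\<lambda>a. map_pmf (Pair a) (cond_marg2 \<eta> a)))
      (\<lambda>c. bind_pmf (cond_marg1 \<xi> (fst c)) (coord_channel n (G c)))"
proof -
  define F where "F a x = bind_pmf (cond_marg2 \<eta> a)
      (\<lambda>b. map_pmf (\<lambda>y. (y, (a, b))) (coord_channel n (G (a, b)) x))" for a x
  have "map_pmf (\<lambda>(x, y, ab). (y, ab)) (change_types n \<xi> \<eta> H) = bind_pmf \<xi> (\<lambda>(x, a). F a x)"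
    unfolding change_types_def map_bind_pmf
    by (intro bind_pmf_cong refl)
      (auto simp: F_def G_def coord_channel_def map_bind_pmf pmf.map_comp o_def split: prod.splits)
  also have "\<dots> = bind_pmf (label_mixture (map_pmf snd \<xi>) (cond_marg1 \<xi>)) (\<lambda>(x, a). F a x)"
    unfolding label_mixture_cond_marg1 ..
  also have "\<dots> = bind_pmf (map_pmf snd \<xi>) (\<lambda>a. bind_pmf (cond_marg1 \<xi> a) (F a))"
    by (simp add: label_mixture_def bind_assoc_pmf bind_map_pmf)
  also have "\<dots> = bind_pmf (map_pmf snd \<xi>) (\<lambda>a. bind_pmf (cond_marg2 \<eta> a) (\<lambda>b.
      bind_pmf (cond_marg1 \<xi> a) (\<lambda>x. map_pmf (\<lambda>y. (y, (a, b))) (coord_channel n (G (a, b)) x))))"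
    unfolding F_def by (intro bind_pmf_cong refl bind_commute_pmf)
  also have "\<dots> = label_mixture (bind_pmf (map_pmf snd \<xi>) (\<lambda>a. map_pmf (Pair a) (cond_marg2 \<eta> a)))
      (\<lambda>c. bind_pmf (cond_marg1 \<xi> (fst c)) (coord_channel n (G c)))"
    by (simp add: label_mixture_def bind_assoc_pmf bind_map_pmf map_bind_pmf)
  finally show ?thesis .
qed

theorem lemma5p9:
  fixes n q :: nat and \<epsilon> :: real
    and \<mu> :: "bool list pmf"
    and \<xi> :: "(bool list \<times> 'a::finite) pmf"
    and \<eta> :: "('a \<times> 'b::finite) pmf"
    and H :: "nat \<Rightarrow> ('a \<times> 'b \<Rightarrow> real) \<times> ('a \<times> 'b \<Rightarrow> real)"
  assumes "0 < \<epsilon>" "\<epsilon> < 1"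
    and "is_detailing n \<mu> \<xi>"
    and "map_pmf fst \<eta> = map_pmf snd \<xi>"
    and "\<forall>i<n. \<forall>ab. fst (H i) ab \<in> {0..1} \<and> snd (H i) ab \<in> {0..1}"
    and "\<forall>i<n. \<forall>a b. pmf \<eta> (a, b) > 0 \<longrightarrow>
           fst (H i) (a, b) = measure_pmf.prob (cond_marg1 \<xi> a) {x. x ! i}"
    and "good_detailing n \<epsilon> q \<xi>"
  shows "good_detailing n \<epsilon> q
           (map_pmf (\<lambda>(x, y, ab). (y, ab)) (change_types n \<xi> \<eta> H))"
  unfolding change_types_eq_label_mixture
proof (rule good_detailing_label_mixture[OF assms(7)])
  show "map_pmf fst (bind_pmf (map_pmf snd \<xi>) (\<lambda>a. map_pmf (Pair a) (cond_marg2 \<eta> a))) =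
      map_pmf snd \<xi>"
    by (simp add: map_bind_pmf pmf.map_comp o_def bind_return_pmf')
qed (rule good_dist_bind_coord_channel)

end
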